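(* Let $\mathbf{s}=(s_1,\dots,s_k)$ be a switch pattern, $l\in\{1,\dots,k\}$, and $\alpha,\beta\ge0$ with $\alpha+\beta\le n$. Then $$g^{(l)}_{\alpha,\beta,\mathbf{s}}=f_{\alpha,\beta,\mathbf{s}_l}\,p_{\alpha,\beta}(\mathbf{s},l),\qquad p_{\alpha,\beta}(\mathbf{s},l)=\frac{(n-s_l)_\alpha(s_l)_\beta}{(n)_{\alpha+\beta}},$$ where $f_{\alpha,\beta,\mathbf{s}_l}=\frac{1}{2^b}\sum_{j=0}^b\binom bj a_{\alpha,\beta}(j)\lambda_{n,j,\mathbf{s}_l}$ with $b=\alpha+\beta$, $a_{\alpha,0}\equiv1$ and $a_{\alpha,\beta}(j)=\frac{b-j}{b}a_{\alpha,\beta-1}(j)-\frac jba_{\alpha,\beta-1}(j-1)$ for $\beta\ge1$. For $0\le\alpha+\beta\le4$ these sequences are: $a_{0,0}(j)=1$; $a_{0,1}(j)=(-1)^j$, $a_{1,0}(j)=1$; $a_{0,2}(j)=(-1)^j$, $a_{1,1}(j)=1-j$, $a_{2,0}(j)=1$; $a_{0,3}(j)=(-1)^j$, $a_{1,2}(j)=(-1)^j(1-2j/3)$, $a_{2,1}(j)=1-2j/3$, $a_{3,0}(j)=1$; $a_{0,4}(j)=(-1)^j$, $a_{1,3}(j)=(-1)^j(1-j/2)$, $a_{2,2}(j)=1-j(4-j)/3$, $a_{3,1}(j)=1-j/2$, $a_{4,0}(j)=1$.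
   Context: Lightbulb process on $n$ bulbs with $k$ stages and switch pattern $\mathbf{s}$: all bulbs initially off unless stated; at stage $r$ a uniformly random subset of exactly $s_r$ bulbs is toggled, independently across stages; $X_{rj}=1$ iff bulb $j$ is toggled at stage $r$ ($X_{0j}$ denotes the deterministic initial status), and $X_j=(\sum_{r=0}^kX_{rj})\bmod 2$ indicates bulb $j$ is on at the end. Define, for all bulbs initially off, $g^{(l)}_{\alpha,\beta,\mathbf{s}}=P(X_1=\dots=X_{\alpha+\beta}=0,\ X_{l1}=\dots=X_{l\alpha}=0,\ X_{l,\alpha+1}=\dots=X_{l,\alpha+\beta}=1)$. For a pattern $\mathbf{t}$, $f_{\alpha,\beta,\mathbf{t}}=P(X_i=0,\ i=1,\dots,\alpha+\beta\mid X_{0i}=0,\ i\le\alpha;\ X_{0i}=1,\ \alpha<i\le\alpha+\beta)$ for the process with pattern $\mathbf{t}$. $\mathbf{s}_l=(s_1,\dots,s_{l-1},s_{l+1},\dots,s_k)$. $(n)_t=n(n-1)\cdots(n-t+1)$, $\lambda_{n,j,s}=\sum_{t=0}^j\binom jt(-2)^t\frac{(s)_t}{(n)_t}$, $\lambda_{n,j,\mathbf{t}}=\prod_r\lambda_{n,j,t_r}$. *)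

theory Defs
  imports "HOL-Probability.Probability"
begin

text \<open>Bulbs are indexed 0..n-1 (bulb j of the paper is index j-1); stages are the
  entries of the list s (stage r of the paper is index r-1). An outcome of the
  switching is a list S of subsets of bulbs, S!(r-1) being the bulbs toggled at stage r.\<close>

definition switch_space :: "nat \<Rightarrow> nat list \<Rightarrow> nat set list set" where
  "switch_space n s = {S. length S = length s \<and>
     (\<forall>r<length s. S ! r \<subseteq> {..<n} \<and> card (S ! r) = s ! r)}"

text \<open>Independent uniformly random subsets of the prescribed sizes at each stage
  = uniform distribution on the product set.\<close>
definition switch_pmf :: "nat \<Rightarrow> nat list \<Rightarrow> nat set list pmf" where
  "switch_pmf n s = pmf_of_set (switch_space n s)"

definition toggles :: "nat set list \<Rightarrow> nat \<Rightarrow> nat" where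
  "toggles S j = length (filter (\<lambda>A. j \<in> A) S)"

text \<open>Final status of bulb j given initial statuses x0 (True = on).\<close>
definition final_on :: "(nat \<Rightarrow> bool) \<Rightarrow> nat set list \<Rightarrow> nat \<Rightarrow> bool" where
  "final_on x0 S j = odd ((if x0 j then 1 else 0) + toggles S j)"

text \<open>f_{alpha,beta,t}: bulbs 1..alpha initially off, alpha+1..alpha+beta initially on;
  probability that bulbs 1..alpha+beta are all off at the end.\<close>
definition f_prob :: "nat \<Rightarrow> nat \<Rightarrow> nat \<Rightarrow> nat list \<Rightarrow> real" where
  "f_prob n \<alpha> \<beta> t = measure_pmf.prob (switch_pmf n t)
     {S. \<forall>i<\<alpha>+\<beta>. \<not> final_on (\<lambda>i. \<alpha> \<le> i) S i}"

text \<open>g^{(l)}_{alpha,beta,s} (l is 1-based), all bulbs initially off.\<close>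
definition g_prob :: "nat \<Rightarrow> nat \<Rightarrow> nat \<Rightarrow> nat list \<Rightarrow> nat \<Rightarrow> real" where
  "g_prob n \<alpha> \<beta> s l = measure_pmf.prob (switch_pmf n s)
     {S. (\<forall>i<\<alpha>+\<beta>. \<not> final_on (\<lambda>_. False) S i)
       \<and> (\<forall>i<\<alpha>. i \<notin> S ! (l - 1))
       \<and> (\<forall>i. \<alpha> \<le> i \<and> i < \<alpha>+\<beta> \<longrightarrow> i \<in> S ! (l - 1))}"

definition remove_stage :: "nat \<Rightarrow> nat list \<Rightarrow> nat list" where
  "remove_stage l s = take (l - 1) s @ drop l s"

definition falling :: "nat \<Rightarrow> nat \<Rightarrow> real" where
  "falling x t = (\<Prod>i<t. (real x - real i))"

definition lambda_s :: "nat \<Rightarrow> nat \<Rightarrow> nat \<Rightarrow> real" where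
  "lambda_s n j s = (\<Sum>t\<le>j. real (j choose t) * (-2) ^ t * falling s t / falling n t)"

definition lambda_pat :: "nat \<Rightarrow> nat \<Rightarrow> nat list \<Rightarrow> real" where
  "lambda_pat n j t = (\<Prod>r<length t. lambda_s n j (t ! r))"

definition p_ab :: "nat \<Rightarrow> nat \<Rightarrow> nat \<Rightarrow> nat list \<Rightarrow> nat \<Rightarrow> real" where
  "p_ab n \<alpha> \<beta> s l = falling (n - s ! (l - 1)) \<alpha> * falling (s ! (l - 1)) \<beta> / falling n (\<alpha> + \<beta>)"

text \<open>a_{alpha,beta}(j); with b = alpha+beta. At j = 0 the term with a(j-1) has
  coefficient 0, so the nat truncation j-1 is harmless.\<close>
fun a_seq :: "nat \<Rightarrow> nat \<Rightarrow> nat \<Rightarrow> real" where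
  "a_seq \<alpha> 0 j = 1"
| "a_seq \<alpha> (Suc \<beta>) j =
     (real (\<alpha> + Suc \<beta>) - real j) / real (\<alpha> + Suc \<beta>) * a_seq \<alpha> \<beta> j
     - real j / real (\<alpha> + Suc \<beta>) * a_seq \<alpha> \<beta> (j - 1)"

end

theory Submission
  imports Defs
begin

text \<open>Condition on stage \<open>l\<close>: the event of \<open>g\<close> prescribes which of the first \<open>\<alpha> + \<beta>\<close>
  bulbs stage \<open>l\<close> toggles, namely exactly the last \<open>\<beta>\<close> of them. For the remaining, independent
  stages these bulbs then behave as if they had been initially on, which gives \<open>f\<close> for the
  reduced pattern, times the probability \<open>p\<close> that a uniformly random \<open>s\<^sub>l\<close>-subset contains
  the last \<open>\<beta>\<close> bulbs and avoids the first \<open>\<alpha>\<close>.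

  For \<open>f\<close>, the indicator that the first \<open>b = \<alpha> + \<beta>\<close> bulbs are all off is \<open>2\<^sup>-\<^sup>b\<close> times
  the sum over \<open>T \<subseteq> {..<b}\<close> of \<open>(-1)\<close> to the number of toggles and initial statuses in \<open>T\<close>.
  Independence factorises the expectation over the stages, and for a single stage toggling a
  random \<open>s\<close>-subset \<open>A\<close>, expanding \<open>\<Prod>i\<in>T. 1 - 2 [i \<in> A]\<close> gives
  \<open>E (-1) ^ card (A \<inter> T) = lambda_s n (card T) s\<close>. Grouping the sets \<open>T\<close> by size, the signs
  contributed by the initially-on bulbs yield the weights \<open>(b choose j) * a_seq \<alpha> \<beta> j\<close>:
  adding one initially-on bulb is exactly the recursion defining \<open>a_seq\<close>.\<close>

lemma of_bool_Ball_eq_prod: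
  "finite I \<Longrightarrow> of_bool (\<forall>i\<in>I. P i) = (\<Prod>i\<in>I. of_bool (P i) :: 'a::comm_semiring_1)"
  by (cases "\<forall>i\<in>I. P i") (simp, auto intro!: prod_zero)

lemma of_bool_all_even:
  assumes "finite I"
  shows "of_bool (\<forall>i\<in>I. even (m i)) = (1/2::real) ^ card I * (\<Sum>T\<in>Pow I. (-1) ^ (\<Sum>i\<in>T. m i))"
proof -
  have "of_bool (\<forall>i\<in>I. even (m i)) = (\<Prod>i\<in>I. (1/2::real) * ((-1) ^ m i + 1))"
    unfolding of_bool_Ball_eq_prod[OF assms] by (intro prod.cong) auto
  also have "\<dots> = (1/2) ^ card I * (\<Prod>i\<in>I. (-1) ^ m i + 1)"
    by (simp only: prod.distrib prod_constant)
  also have "(\<Prod>i\<in>I. (-1::real) ^ m i + 1) = (\<Sum>T\<in>Pow I. (\<Prod>i\<in>T. (-1) ^ m i) * (\<Prod>i\<in>I - T. 1))"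
    by (rule prod_add[OF assms])
  also have "\<dots> = (\<Sum>T\<in>Pow I. (-1) ^ (\<Sum>i\<in>T. m i))"
    by (simp add: power_sum)
  finally show ?thesis .
qed

lemma sum_Pow_insert:
  assumes "finite F" "x \<notin> F"
  shows "(\<Sum>T\<in>Pow (insert x F). g T) = (\<Sum>T\<in>Pow F. g T) + (\<Sum>T\<in>Pow F. g (insert x T))"
proof -
  have "Pow F \<inter> insert x ` Pow F = {}" "inj_on (insert x) (Pow F)"
    using assms by (auto simp: inj_on_def)
  then show ?thesis
    unfolding Pow_insert using assms by (simp add: sum.union_disjoint sum.reindex)
qed

lemma sum_Pow_card:
  fixes h :: "nat \<Rightarrow> 'a::comm_semiring_1"
  assumes "finite A"
  shows "(\<Sum>T\<in>Pow A. h (card T)) = (\<Sum>j\<le>card A. of_nat (card A choose j) * h j)"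
proof -
  have "(\<Sum>T\<in>Pow A. h (card T)) = (\<Sum>j\<le>card A. \<Sum>T\<in>{T \<in> Pow A. card T = j}. h (card T))"
    using assms by (intro sum.group[symmetric]) (auto intro: card_mono)
  also have "\<dots> = (\<Sum>j\<le>card A. of_nat (card A choose j) * h j)"
  proof (intro sum.cong refl)
    fix j
    have "card {T \<in> Pow A. card T = j} = card A choose j"
      using n_subsets[OF assms, of j] by (simp add: Collect_conj_eq[symmetric])
    then show "(\<Sum>T\<in>{T \<in> Pow A. card T = j}. h (card T)) = of_nat (card A choose j) * h j"
      by simp
  qed
  finally show ?thesis .
qed

lemma neg_one_power_card_Int:
  assumes "finite T"
  shows "(-1::real) ^ card (A \<inter> T) = (\<Sum>U\<in>Pow T. of_bool (U \<subseteq> A) * (-2) ^ card U)"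
proof -
  have "(-1::real) ^ card (A \<inter> T) = (\<Prod>i\<in>T. if i \<in> A then -1 else 1)"
    using assms by (simp add: prod.If_cases Int_commute Int_def)
  also have "\<dots> = (\<Prod>i\<in>T. of_bool (i \<in> A) * (-2) + 1)"
    by (intro prod.cong) auto
  also have "\<dots> = (\<Sum>U\<in>Pow T. (\<Prod>i\<in>U. of_bool (i \<in> A) * (-2)) * (\<Prod>i\<in>T - U. 1))"
    by (rule prod_add[OF assms])
  also have "\<dots> = (\<Sum>U\<in>Pow T. of_bool (U \<subseteq> A) * (-2) ^ card U)"
    using assms by (intro sum.cong refl)
      (simp add: prod.distrib of_bool_Ball_eq_prod[symmetric] subset_eq finite_subset)
  finally show ?thesis .
qed

lemma falling_0 [simp]: "falling m 0 = 1"
  by (simp add: falling_def)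

lemma falling_Suc: "falling m (Suc t) = falling m t * (real m - real t)"
  by (simp add: falling_def)

lemma falling_eq_0: "m < t \<Longrightarrow> falling m t = 0"
  unfolding falling_def by (auto intro!: prod_zero bexI[of _ m])

lemma falling_fact: "t \<le> m \<Longrightarrow> falling m t = fact m / fact (m - t)"
proof (induction t)
  case (Suc t)
  then have "m - t = Suc (m - Suc t)"
    by simp
  then have "fact (m - t) = real (m - t) * fact (m - Suc t)"
    by (simp only: fact_Suc of_nat_Suc)
  with Suc show ?case by (simp add: falling_Suc of_nat_diff field_simps)
qed simp

lemma falling_pos: "t \<le> m \<Longrightarrow> falling m t > 0"
  by (simp add: falling_fact)

definition subsets_of_size :: "nat \<Rightarrow> nat \<Rightarrow> nat set set" where
  "subsets_of_size n x = {A. A \<subseteq> {..<n} \<and> card A = x}"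

lemma finite_subsets_of_size: "finite (subsets_of_size n x)"
  unfolding subsets_of_size_def by (rule finite_subset[of _ "Pow {..<n}"]) auto

lemma card_subsets_of_size: "card (subsets_of_size n x) = n choose x"
  unfolding subsets_of_size_def using n_subsets[of "{..<n}" x] by simp

lemma card_subsets_of_size_containing_avoiding:
  assumes "X \<subseteq> {..<n}" "Y \<subseteq> {..<n}" "X \<inter> Y = {}" "card Y \<le> x"
  shows "card {A \<in> subsets_of_size n x. Y \<subseteq> A \<and> A \<inter> X = {}} =
         (n - card X - card Y) choose (x - card Y)"
proof -
  let ?M = "{..<n} - X - Y"
  have fin: "finite X" "finite Y" using assms(1,2) finite_subset by auto
  have "{A \<in> subsets_of_size n x. Y \<subseteq> A \<and> A \<inter> X = {}} =
        (\<lambda>B. B \<union> Y) ` {B. B \<subseteq> ?M \<and> card B = x - card Y}"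
  proof (intro set_eqI iffI)
    fix A assume A: "A \<in> {A \<in> subsets_of_size n x. Y \<subseteq> A \<and> A \<inter> X = {}}"
    then have "finite A" "A - Y \<subseteq> ?M" "A = (A - Y) \<union> Y"
      by (auto simp: subsets_of_size_def intro: finite_subset)
    moreover have "card (A - Y) = x - card Y"
      using A fin by (simp add: subsets_of_size_def card_Diff_subset)
    ultimately show "A \<in> (\<lambda>B. B \<union> Y) ` {B. B \<subseteq> ?M \<and> card B = x - card Y}"
      by blast
  next
    fix A assume "A \<in> (\<lambda>B. B \<union> Y) ` {B. B \<subseteq> ?M \<and> card B = x - card Y}"
    then obtain B where B: "A = B \<union> Y" "B \<subseteq> ?M" "card B = x - card Y" by auto
    then have "finite B" "B \<inter> Y = {}" by (auto intro: finite_subset)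
    with B fin assms(4) have "card A = x" by (simp add: card_Un_disjoint)
    with B assms show "A \<in> {A \<in> subsets_of_size n x. Y \<subseteq> A \<and> A \<inter> X = {}}"
      by (auto simp: subsets_of_size_def)
  qed
  moreover have "inj_on (\<lambda>B. B \<union> Y) {B. B \<subseteq> ?M \<and> card B = x - card Y}"
    by (rule inj_onI) blast
  moreover have "card ?M = n - card X - card Y"
  proof -
    have "?M = {..<n} - (X \<union> Y)" by blast
    then show ?thesis using assms fin by (simp add: card_Diff_subset card_Un_disjoint)
  qed
  ultimately show ?thesis
    by (simp add: card_image n_subsets)
qed

lemma card_subsets_of_size_containing_avoiding_ratio:
  assumes "X \<subseteq> {..<n}" "Y \<subseteq> {..<n}" "X \<inter> Y = {}" "x \<le> n"
  shows "card {A \<in> subsets_of_size n x. Y \<subseteq> A \<and> A \<inter> X = {}} / real (n choose x) =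
         falling (n - x) (card X) * falling x (card Y) / falling n (card X + card Y)"
proof -
  define a b where "a = card X" and "b = card Y"
  let ?C = "{A \<in> subsets_of_size n x. Y \<subseteq> A \<and> A \<inter> X = {}}"
  have fin: "finite X" "finite Y" using assms(1,2) finite_subset by auto
  have "a + b = card (X \<union> Y)" unfolding a_def b_def using fin assms(3) by (simp add: card_Un_disjoint)
  also have "\<dots> \<le> n" using assms(1,2) by (metis card_lessThan card_mono finite_lessThan le_sup_iff)
  finally have ab: "a + b \<le> n" .
  have "card ?C * falling n (a + b) = (n choose x) * falling (n - x) a * falling x b"
  proof (cases "b \<le> x \<and> a \<le> n - x")
    case True
    then have "card ?C = (n - a - b) choose (x - b)"
      unfolding a_def b_def using assms by (intro card_subsets_of_size_containing_avoiding) auto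
    moreover have "n - a - b - (x - b) = n - x - a" "x - b \<le> n - a - b" using True assms(4) by auto
    ultimately show ?thesis
      using True ab assms(4) by (simp add: binomial_fact falling_fact diff_diff_add)
  next
    case False
    then have "falling (n - x) a * falling x b = 0" by (auto simp: falling_eq_0)
    moreover have "card ?C = 0"
    proof (cases "b \<le> x")
      case True
      with False ab have "(n - a - b) choose (x - b) = 0" by (intro binomial_eq_0) auto
      with True show ?thesis
        unfolding a_def b_def using assms by (subst card_subsets_of_size_containing_avoiding) auto
    next
      case False
      have "?C = {}"
      proof (intro equals0I)
        fix A assume "A \<in> ?C"
        then have "b \<le> x"
          unfolding b_def by (auto simp: subsets_of_size_def intro: card_mono finite_subset)
        with False show False ..
      qed
      then show ?thesis by (simp only: card.empty)
    qed
    ultimately show ?thesis by simp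
  qed
  moreover have "falling n (a + b) > 0" "real (n choose x) > 0" using falling_pos[OF ab] assms(4) by auto
  ultimately show ?thesis unfolding a_def b_def by (simp add: field_simps)
qed

lemma sum_subsets_of_size_neg_one_power_card_Int:
  assumes T: "T \<subseteq> {..<n}" and x: "x \<le> n"
  shows "(\<Sum>A\<in>subsets_of_size n x. (-1::real) ^ card (A \<inter> T)) = (n choose x) * lambda_s n (card T) x"
proof -
  have fin: "finite T" using T finite_subset by auto
  have "(\<Sum>A\<in>subsets_of_size n x. (-1::real) ^ card (A \<inter> T)) =
        (\<Sum>U\<in>Pow T. \<Sum>A\<in>subsets_of_size n x. of_bool (U \<subseteq> A) * (-2) ^ card U)"
    unfolding neg_one_power_card_Int[OF fin] by (rule sum.swap)
  also have "\<dots> = (\<Sum>U\<in>Pow T. card {A \<in> subsets_of_size n x. U \<subseteq> A} * (-2::real) ^ card U)"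
    using finite_subsets_of_size[of n x] by (simp add: Int_def conj_commute)
  also have "\<dots> = (\<Sum>U\<in>Pow T. (n choose x) * ((-2) ^ card U * falling x (card U) / falling n (card U)))"
  proof (intro sum.cong refl)
    fix U assume "U \<in> Pow T"
    then have "card {A \<in> subsets_of_size n x. U \<subseteq> A \<and> A \<inter> {} = {}} / real (n choose x) =
               falling (n - x) (card {}) * falling x (card U) / falling n (card {} + card U)"
      using T x card_subsets_of_size_containing_avoiding_ratio[of "{}" n U x] by auto
    moreover have "real (n choose x) > 0" using x by simp
    ultimately show "real (card {A \<in> subsets_of_size n x. U \<subseteq> A}) * (-2) ^ card U =
               (n choose x) * ((-2) ^ card U * falling x (card U) / falling n (card U))"
      by (simp add: field_simps)
  qed
  also have "\<dots> = (n choose x) * (\<Sum>U\<in>Pow T. (-2) ^ card U * falling x (card U) / falling n (card U))"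
    by (simp only: sum_distrib_left)
  also have "\<dots> = (n choose x) * lambda_s n (card T) x"
    using sum_Pow_card[OF fin, of "\<lambda>u. (-2) ^ u * falling x u / falling n u"]
    by (simp add: lambda_s_def mult.assoc)
  finally show ?thesis .
qed

lemma switch_space_Nil: "switch_space n [] = {[]}"
  by (auto simp: switch_space_def)

lemma switch_space_Cons:
  "switch_space n (x # xs) = (\<lambda>(A, Q). A # Q) ` (subsets_of_size n x \<times> switch_space n xs)"
proof (intro set_eqI iffI)
  fix S assume S: "S \<in> switch_space n (x # xs)"
  then obtain A Q where S_eq: "S = A # Q" by (cases S) (auto simp: switch_space_def)
  have "A \<in> subsets_of_size n x" using S S_eq by (force simp: switch_space_def subsets_of_size_def)
  moreover have "Q \<in> switch_space n xs" using S S_eq by (force simp: switch_space_def)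
  ultimately show "S \<in> (\<lambda>(A, Q). A # Q) ` (subsets_of_size n x \<times> switch_space n xs)"
    using S_eq by force
next
  fix S assume "S \<in> (\<lambda>(A, Q). A # Q) ` (subsets_of_size n x \<times> switch_space n xs)"
  then obtain A Q where "S = A # Q" "A \<in> subsets_of_size n x" "Q \<in> switch_space n xs" by auto
  then show "S \<in> switch_space n (x # xs)"
    by (auto simp: switch_space_def subsets_of_size_def nth_Cons split: nat.splits)
qed

lemma sum_switch_space_Cons:
  "(\<Sum>S\<in>switch_space n (x # xs). F S) =
   (\<Sum>A\<in>subsets_of_size n x. \<Sum>Q\<in>switch_space n xs. F (A # Q))"
proof -
  have "inj_on (\<lambda>(A, Q). A # Q) (subsets_of_size n x \<times> switch_space n xs)"
    by (auto simp: inj_on_def)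
  then show ?thesis
    unfolding switch_space_Cons
    by (subst sum.reindex) (simp_all add: sum.cartesian_product case_prod_beta)
qed

lemma finite_switch_space: "finite (switch_space n t)"
  by (induction t) (auto simp: switch_space_Nil switch_space_Cons finite_subsets_of_size)

lemma switch_space_nonempty: "\<forall>x\<in>set t. x \<le> n \<Longrightarrow> switch_space n t \<noteq> {}"
proof (induction t)
  case (Cons x xs)
  then have "card (subsets_of_size n x) \<noteq> 0"
    by (simp add: card_subsets_of_size)
  then have "subsets_of_size n x \<noteq> {}"
    by auto
  with Cons show ?case by (auto simp: switch_space_Cons)
qed (simp add: switch_space_Nil)

lemma length_switch_space: "S \<in> switch_space n t \<Longrightarrow> length S = length t"
  by (simp add: switch_space_def)

lemma sum_switch_space_append:
  "(\<Sum>S\<in>switch_space n (xs @ ys). F S) =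
   (\<Sum>P\<in>switch_space n xs. \<Sum>Q\<in>switch_space n ys. F (P @ Q))"
proof (induction xs arbitrary: F)
  case Nil
  show ?case by (simp add: switch_space_Nil)
next
  case (Cons x xs)
  show ?case
    unfolding append_Cons sum_switch_space_Cons Cons.IH ..
qed

lemma card_switch_space_Cons:
  "card (switch_space n (x # xs)) = (n choose x) * card (switch_space n xs)"
  using sum_switch_space_Cons[where F = "\<lambda>_. 1::nat" and n = n and x = x and xs = xs]
  by (simp add: card_subsets_of_size)

lemma card_switch_space_append:
  "card (switch_space n (xs @ ys)) = card (switch_space n xs) * card (switch_space n ys)"
  using sum_switch_space_append[where F = "\<lambda>_. 1::nat" and n = n and xs = xs and ys = ys] by simp

lemma sum_switch_space_insert_stage:
  "(\<Sum>S\<in>switch_space n (xs @ x # ys). F S) =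
   (\<Sum>A\<in>subsets_of_size n x. \<Sum>P\<in>switch_space n xs. \<Sum>Q\<in>switch_space n ys. F (P @ A # Q))"
  by (simp add: sum_switch_space_append sum_switch_space_Cons sum.swap[of _ "subsets_of_size n x"])

lemma prob_switch_pmf:
  assumes "\<forall>x\<in>set t. x \<le> n"
  shows "measure_pmf.prob (switch_pmf n t) E = card (switch_space n t \<inter> E) / card (switch_space n t)"
  unfolding switch_pmf_def using switch_space_nonempty[OF assms] finite_switch_space
  by (rule measure_pmf_of_set)

lemma toggles_Nil [simp]: "toggles [] j = 0"
  by (simp add: toggles_def)

lemma toggles_Cons [simp]: "toggles (A # Q) j = of_bool (j \<in> A) + toggles Q j"
  by (simp add: toggles_def)

lemma toggles_append [simp]: "toggles (P @ Q) j = toggles P j + toggles Q j"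
  by (simp add: toggles_def)

lemma lambda_pat_Cons: "lambda_pat n j (x # xs) = lambda_s n j x * lambda_pat n j xs"
  unfolding lambda_pat_def length_Cons prod.lessThan_Suc_shift by simp

lemma sum_switch_space_neg_one_power_toggles:
  assumes "\<forall>x\<in>set t. x \<le> n" and T: "T \<subseteq> {..<n}"
  shows "(\<Sum>R\<in>switch_space n t. (-1::real) ^ (\<Sum>i\<in>T. toggles R i)) =
         card (switch_space n t) * lambda_pat n (card T) t"
  using assms(1)
proof (induction t)
  case Nil
  then show ?case by (simp add: switch_space_Nil lambda_pat_def)
next
  case (Cons x xs)
  have fin: "finite T" using T finite_subset by auto
  have "(-1::real) ^ (\<Sum>i\<in>T. toggles (A # Q) i) = (-1) ^ card (A \<inter> T) * (-1) ^ (\<Sum>i\<in>T. toggles Q i)"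
    for A Q
    using fin by (simp add: sum.distrib power_add Int_def conj_commute)
  then have "(\<Sum>R\<in>switch_space n (x # xs). (-1::real) ^ (\<Sum>i\<in>T. toggles R i)) =
        (\<Sum>A\<in>subsets_of_size n x. (-1) ^ card (A \<inter> T)) *
        (\<Sum>Q\<in>switch_space n xs. (-1) ^ (\<Sum>i\<in>T. toggles Q i))"
    by (simp add: sum_switch_space_Cons sum_product)
  also have "\<dots> = card (switch_space n (x # xs)) * lambda_pat n (card T) (x # xs)"
    using Cons by (simp add: sum_subsets_of_size_neg_one_power_card_Int[OF T]
        card_switch_space_Cons lambda_pat_Cons)
  finally show ?case .
qed

lemma binomial_mult_a_seq_Suc:
  "real (Suc (\<alpha> + \<beta>) choose j) * a_seq \<alpha> (Suc \<beta>) j =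
   real ((\<alpha> + \<beta>) choose j) * a_seq \<alpha> \<beta> j
   - (if j = 0 then 0 else real ((\<alpha> + \<beta>) choose (j - 1)) * a_seq \<alpha> \<beta> (j - 1))"
proof -
  let ?b = "\<alpha> + \<beta>"
  have stay: "real (Suc ?b choose j) * (real (Suc ?b) - real j) = real (Suc ?b) * real (?b choose j)"
  proof (cases "j \<le> Suc ?b")
    case True
    have "(Suc ?b - j) * (Suc ?b choose j) = Suc ?b * (?b choose j)"
      using binomial_absorb_comp[of "Suc ?b" j] by simp
    then have "real (Suc ?b - j) * real (Suc ?b choose j) = real (Suc ?b) * real (?b choose j)"
      by (simp only: of_nat_mult [symmetric])
    with True show ?thesis by (simp add: of_nat_diff mult.commute)
  qed (simp add: binomial_eq_0)
  have move: "real (Suc ?b choose j) * real j =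
              real (Suc ?b) * (if j = 0 then 0 else real (?b choose (j - 1)))"
  proof (cases j)
    case (Suc k)
    have "(Suc ?b choose Suc k) * Suc k = Suc ?b * (?b choose k)"
      using Suc_times_binomial[of k ?b] by (simp only: mult.commute)
    then have "real (Suc ?b choose Suc k) * real (Suc k) = real (Suc ?b) * real (?b choose k)"
      by (simp only: of_nat_mult [symmetric])
    with Suc show ?thesis by (simp del: of_nat_Suc binomial_Suc_Suc)
  qed simp
  have "real (Suc ?b choose j) * a_seq \<alpha> (Suc \<beta>) j =
     real (Suc ?b choose j) * (real (Suc ?b) - real j) / real (Suc ?b) * a_seq \<alpha> \<beta> j
     - real (Suc ?b choose j) * real j / real (Suc ?b) * a_seq \<alpha> \<beta> (j - 1)"
    by (simp add: algebra_simps)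
  then show ?thesis
    unfolding stay move by (simp del: of_nat_Suc)
qed

lemma sum_Pow_neg_one_power_eq_a_seq:
  fixes h :: "nat \<Rightarrow> real"
  shows "(\<Sum>T\<in>Pow {..<\<alpha> + \<beta>}. (-1) ^ card (T \<inter> {\<alpha>..<\<alpha> + \<beta>}) * h (card T)) =
         (\<Sum>j\<le>\<alpha> + \<beta>. real ((\<alpha> + \<beta>) choose j) * a_seq \<alpha> \<beta> j * h j)"
proof (induction \<beta> arbitrary: h)
  case 0
  show ?case using sum_Pow_card[of "{..<\<alpha>}" h] by simp
next
  case (Suc \<beta>)
  let ?b = "\<alpha> + \<beta>"
  define D where "D j = real (?b choose j) * a_seq \<alpha> \<beta> j" for j
  have without_new: "T \<inter> {\<alpha>..<Suc ?b} = T \<inter> {\<alpha>..<?b}" if "T \<in> Pow {..<?b}" for T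
    using that by auto
  have with_new: "card (insert ?b T \<inter> {\<alpha>..<Suc ?b}) = Suc (card (T \<inter> {\<alpha>..<?b}))"
    and card_insert_new: "card (insert ?b T) = Suc (card T)" if "T \<in> Pow {..<?b}" for T
  proof -
    have "finite T" "?b \<notin> T" using that finite_subset by auto
    moreover have "insert ?b T \<inter> {\<alpha>..<Suc ?b} = insert ?b (T \<inter> {\<alpha>..<?b})" using that by auto
    ultimately show "card (insert ?b T \<inter> {\<alpha>..<Suc ?b}) = Suc (card (T \<inter> {\<alpha>..<?b}))"
      and "card (insert ?b T) = Suc (card T)" by simp_all
  qed
  have "(\<Sum>T\<in>Pow {..<\<alpha> + Suc \<beta>}. (-1) ^ card (T \<inter> {\<alpha>..<\<alpha> + Suc \<beta>}) * h (card T)) =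
        (\<Sum>T\<in>Pow {..<?b}. (-1) ^ card (T \<inter> {\<alpha>..<?b}) * h (card T))
        - (\<Sum>T\<in>Pow {..<?b}. (-1) ^ card (T \<inter> {\<alpha>..<?b}) * h (Suc (card T)))"
    using sum_Pow_insert[of "{..<?b}" ?b "\<lambda>T. (-1) ^ card (T \<inter> {\<alpha>..<Suc ?b}) * h (card T)"]
    by (simp add: lessThan_Suc without_new with_new card_insert_new sum_negf)
  also have "\<dots> = (\<Sum>j\<le>?b. D j * h j) - (\<Sum>j\<le>?b. D j * h (Suc j))"
    unfolding D_def using Suc.IH[of h] Suc.IH[of "\<lambda>j. h (Suc j)"] by simp
  also have "(\<Sum>j\<le>?b. D j * h j) = (\<Sum>j\<le>Suc ?b. D j * h j)"
    by (simp add: D_def)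
  also have "(\<Sum>j\<le>?b. D j * h (Suc j)) = (\<Sum>j\<le>Suc ?b. (if j = 0 then 0 else D (j - 1)) * h j)"
    by (subst sum.atMost_Suc_shift) simp
  also have "(\<Sum>j\<le>Suc ?b. D j * h j) - (\<Sum>j\<le>Suc ?b. (if j = 0 then 0 else D (j - 1)) * h j) =
             (\<Sum>j\<le>Suc ?b. real (Suc ?b choose j) * a_seq \<alpha> (Suc \<beta>) j * h j)"
    unfolding sum_subtractf[symmetric] binomial_mult_a_seq_Suc D_def
    by (intro sum.cong refl) (simp add: algebra_simps)
  finally show ?case by simp
qed

lemma of_bool_all_off_eq_sum_Pow:
  "of_bool (\<forall>i<\<alpha> + \<beta>. \<not> final_on (\<lambda>i. \<alpha> \<le> i) R i) =
   (1/2::real) ^ (\<alpha> + \<beta>) * (\<Sum>T\<in>Pow {..<\<alpha> + \<beta>}.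
      (-1) ^ card (T \<inter> {\<alpha>..<\<alpha> + \<beta>}) * (-1) ^ (\<Sum>i\<in>T. toggles R i))"
proof -
  let ?b = "\<alpha> + \<beta>"
  let ?m = "\<lambda>i. of_bool (\<alpha> \<le> i) + toggles R i"
  have sign: "(-1::real) ^ (\<Sum>i\<in>T. ?m i) = (-1) ^ card (T \<inter> {\<alpha>..<?b}) * (-1) ^ (\<Sum>i\<in>T. toggles R i)"
    if "T \<in> Pow {..<?b}" for T
  proof -
    have "finite T" "T \<inter> {i. \<alpha> \<le> i} = T \<inter> {\<alpha>..<?b}" using that finite_subset by auto
    then show ?thesis by (simp add: sum.distrib power_add Int_def)
  qed
  have "of_bool (\<forall>i<?b. \<not> final_on (\<lambda>i. \<alpha> \<le> i) R i) = (of_bool (\<forall>i\<in>{..<?b}. even (?m i)) :: real)"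
    by (intro arg_cong[where f = of_bool]) (auto simp: final_on_def)
  also have "\<dots> = (1/2) ^ ?b * (\<Sum>T\<in>Pow {..<?b}. (-1) ^ (\<Sum>i\<in>T. ?m i))"
    by (rule of_bool_all_even[OF finite_lessThan, of ?b ?m, unfolded card_lessThan])
  finally show ?thesis
    by (simp only: sum.cong[OF refl sign])
qed

lemma f_prob_eq_sum_a_seq_lambda_pat:
  assumes t: "\<forall>x\<in>set t. x \<le> n" and ab: "\<alpha> + \<beta> \<le> n"
  shows "f_prob n \<alpha> \<beta> t = 1 / 2 ^ (\<alpha> + \<beta>) *
           (\<Sum>j\<le>\<alpha> + \<beta>. real ((\<alpha> + \<beta>) choose j) * a_seq \<alpha> \<beta> j * lambda_pat n j t)"
proof -
  let ?b = "\<alpha> + \<beta>"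
  let ?\<Omega> = "switch_space n t"
  let ?sign = "\<lambda>T. (-1::real) ^ card (T \<inter> {\<alpha>..<?b})"
  have "card ?\<Omega> \<noteq> 0" using switch_space_nonempty[OF t] finite_switch_space by auto
  have "real (card (?\<Omega> \<inter> {R. \<forall>i<?b. \<not> final_on (\<lambda>i. \<alpha> \<le> i) R i})) =
        (\<Sum>R\<in>?\<Omega>. of_bool (\<forall>i<?b. \<not> final_on (\<lambda>i. \<alpha> \<le> i) R i))"
    using finite_switch_space by simp
  also have "\<dots> = (1/2) ^ ?b * (\<Sum>T\<in>Pow {..<?b}. ?sign T * (\<Sum>R\<in>?\<Omega>. (-1) ^ (\<Sum>i\<in>T. toggles R i)))"
    unfolding of_bool_all_off_eq_sum_Pow sum_distrib_left [symmetric]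
    by (subst sum.swap) (simp only: sum_distrib_left)
  also have "\<dots> = (1/2) ^ ?b * (\<Sum>T\<in>Pow {..<?b}. ?sign T * (card ?\<Omega> * lambda_pat n (card T) t))"
  proof -
    have per_set: "?sign T * (\<Sum>R\<in>?\<Omega>. (-1) ^ (\<Sum>i\<in>T. toggles R i)) =
                   ?sign T * (card ?\<Omega> * lambda_pat n (card T) t)" if "T \<in> Pow {..<?b}" for T
      using that ab by (subst sum_switch_space_neg_one_power_toggles[OF t]) auto
    show ?thesis by (simp only: sum.cong[OF refl per_set])
  qed
  also have "\<dots> = (1/2) ^ ?b * (card ?\<Omega> * (\<Sum>T\<in>Pow {..<?b}. ?sign T * lambda_pat n (card T) t))"
    by (simp add: sum_distrib_left mult.left_commute)
  finally show ?thesis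
    using \<open>card ?\<Omega> \<noteq> 0\<close>
    unfolding f_prob_def prob_switch_pmf[OF t]
    by (simp add: sum_Pow_neg_one_power_eq_a_seq[of \<alpha> \<beta> "\<lambda>j. lambda_pat n j t"] power_one_over)
qed

lemma card_switch_space_insert_stage_Int:
  assumes "\<And>P A Q. P \<in> switch_space n xs \<Longrightarrow> A \<in> subsets_of_size n x \<Longrightarrow>
             P @ A # Q \<in> E \<longleftrightarrow> A \<in> G \<and> P @ Q \<in> F"
  shows "card (switch_space n (xs @ x # ys) \<inter> E) =
         card (subsets_of_size n x \<inter> G) * card (switch_space n (xs @ ys) \<inter> F)"
proof -
  have "real (card (switch_space n (xs @ x # ys) \<inter> E)) =
        (\<Sum>S\<in>switch_space n (xs @ x # ys). of_bool (S \<in> E))"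
    using finite_switch_space by simp
  also have "\<dots> = (\<Sum>A\<in>subsets_of_size n x. \<Sum>P\<in>switch_space n xs. \<Sum>Q\<in>switch_space n ys.
                     of_bool (A \<in> G) * of_bool (P @ Q \<in> F))"
    unfolding sum_switch_space_insert_stage by (auto simp: assms of_bool_conj intro!: sum.cong)
  also have "\<dots> = (\<Sum>A\<in>subsets_of_size n x. of_bool (A \<in> G)) *
                   (\<Sum>R\<in>switch_space n (xs @ ys). of_bool (R \<in> F))"
    by (simp only: sum_switch_space_append sum_distrib_left [symmetric] sum_distrib_right [symmetric])
  also have "\<dots> = card (subsets_of_size n x \<inter> G) * card (switch_space n (xs @ ys) \<inter> F)"
    using finite_switch_space finite_subsets_of_size by simp
  finally show ?thesis
    by (simp only: of_nat_mult [symmetric] of_nat_eq_iff)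
qed

lemma final_on_insert_stage:
  assumes "\<forall>i<\<alpha>. i \<notin> A" "\<forall>i. \<alpha> \<le> i \<and> i < \<alpha> + \<beta> \<longrightarrow> i \<in> A" "i < \<alpha> + \<beta>"
  shows "final_on (\<lambda>_. False) (P @ A # Q) i = final_on (\<lambda>i. \<alpha> \<le> i) (P @ Q) i"
proof -
  have "i \<in> A \<longleftrightarrow> \<alpha> \<le> i" using assms not_le by blast
  then show ?thesis by (simp add: final_on_def of_bool_def ac_simps)
qed

lemma g_prob_eq_f_prob_mult_p_ab:
  assumes s: "\<forall>x\<in>set s. x \<le> n" and l: "1 \<le> l" "l \<le> length s" and ab: "\<alpha> + \<beta> \<le> n"
  shows "g_prob n \<alpha> \<beta> s l = f_prob n \<alpha> \<beta> (remove_stage l s) * p_ab n \<alpha> \<beta> s l"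
proof -
  let ?b = "\<alpha> + \<beta>"
  define xs x ys where "xs = take (l - 1) s" and "x = s ! (l - 1)" and "ys = drop l s"
  have s_eq: "s = xs @ x # ys"
    unfolding xs_def x_def ys_def using l id_take_nth_drop[of "l - 1" s] by simp
  have t_eq: "remove_stage l s = xs @ ys"
    unfolding remove_stage_def xs_def ys_def ..
  have x: "x \<le> n" and t: "\<forall>y\<in>set (xs @ ys). y \<le> n"
    using s unfolding s_eq by auto
  define Eg where "Eg = {S. (\<forall>i<?b. \<not> final_on (\<lambda>_. False) S i) \<and> (\<forall>i<\<alpha>. i \<notin> S ! (l - 1))
                 \<and> (\<forall>i. \<alpha> \<le> i \<and> i < ?b \<longrightarrow> i \<in> S ! (l - 1))}"
  define Ef where "Ef = {R. \<forall>i<?b. \<not> final_on (\<lambda>i. \<alpha> \<le> i) R i}"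
  define good where "good = {A \<in> subsets_of_size n x. {\<alpha>..<?b} \<subseteq> A \<and> A \<inter> {..<\<alpha>} = {}}"
  have event: "P @ A # Q \<in> Eg \<longleftrightarrow> A \<in> good \<and> P @ Q \<in> Ef"
    if "P \<in> switch_space n xs" "A \<in> subsets_of_size n x" for P A Q
  proof -
    have "(P @ A # Q) ! (l - 1) = A"
      using that(1) l by (simp add: xs_def length_switch_space nth_append min_def)
    moreover have "A \<in> good \<longleftrightarrow> (\<forall>i<\<alpha>. i \<notin> A) \<and> (\<forall>i. \<alpha> \<le> i \<and> i < ?b \<longrightarrow> i \<in> A)"
      using that(2) by (auto simp: good_def)
    ultimately show ?thesis by (auto simp: Eg_def Ef_def final_on_insert_stage)
  qed
  have "card (switch_space n s \<inter> Eg) = card good * card (switch_space n (xs @ ys) \<inter> Ef)"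
  proof -
    have "subsets_of_size n x \<inter> good = good" by (auto simp: good_def)
    with card_switch_space_insert_stage_Int[OF event] show ?thesis
      unfolding s_eq by simp
  qed
  moreover have "card (switch_space n s) = (n choose x) * card (switch_space n (xs @ ys))"
    unfolding s_eq card_switch_space_append card_switch_space_Cons by simp
  moreover have "card good / real (n choose x) = p_ab n \<alpha> \<beta> s l"
  proof -
    have "{..<\<alpha>} \<subseteq> {..<n}" "{\<alpha>..<?b} \<subseteq> {..<n}" "{..<\<alpha>} \<inter> {\<alpha>..<?b} = {}"
      using ab by auto
    from card_subsets_of_size_containing_avoiding_ratio[OF this x] show ?thesis
      by (simp add: good_def p_ab_def x_def)
  qed
  moreover have "n choose x > 0" using x by simp
  ultimately show ?thesis
    unfolding g_prob_def f_prob_def prob_switch_pmf[OF s] t_eq prob_switch_pmf[OF t]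
      Eg_def [symmetric] Ef_def [symmetric]
    by (simp add: field_simps)
qed

theorem corollary4p1:
  fixes n \<alpha> \<beta> l :: nat and s :: "nat list"
  assumes pattern: "\<forall>r<length s. s ! r \<le> n"
    and l: "1 \<le> l" "l \<le> length s"
    and ab: "\<alpha> + \<beta> \<le> n"
  shows "g_prob n \<alpha> \<beta> s l = f_prob n \<alpha> \<beta> (remove_stage l s) * p_ab n \<alpha> \<beta> s l
    \<and> f_prob n \<alpha> \<beta> (remove_stage l s) =
        1 / 2 ^ (\<alpha> + \<beta>) * (\<Sum>j\<le>\<alpha> + \<beta>. real ((\<alpha> + \<beta>) choose j) * a_seq \<alpha> \<beta> j
                                   * lambda_pat n j (remove_stage l s))
    \<and> (\<forall>j::nat.
        (j \<le> 0 \<longrightarrow> a_seq 0 0 j = 1)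
      \<and> (j \<le> 1 \<longrightarrow> a_seq 0 1 j = (-1) ^ j \<and> a_seq 1 0 j = 1)
      \<and> (j \<le> 2 \<longrightarrow> a_seq 0 2 j = (-1) ^ j \<and> a_seq 1 1 j = 1 - real j \<and> a_seq 2 0 j = 1)
      \<and> (j \<le> 3 \<longrightarrow> a_seq 0 3 j = (-1) ^ j \<and> a_seq 1 2 j = (-1) ^ j * (1 - 2 * real j / 3)
                 \<and> a_seq 2 1 j = 1 - 2 * real j / 3 \<and> a_seq 3 0 j = 1)
      \<and> (j \<le> 4 \<longrightarrow> a_seq 0 4 j = (-1) ^ j \<and> a_seq 1 3 j = (-1) ^ j * (1 - real j / 2)
                 \<and> a_seq 2 2 j = 1 - real j * (4 - real j) / 3
                 \<and> a_seq 3 1 j = 1 - real j / 2 \<and> a_seq 4 0 j = 1))"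
proof -
  have bounded: "\<forall>x\<in>set s. x \<le> n"
    using pattern by (simp add: all_set_conv_all_nth)
  then have bounded_removed: "\<forall>x\<in>set (remove_stage l s). x \<le> n"
    by (auto simp: remove_stage_def dest: in_set_takeD in_set_dropD)
  show ?thesis
    by (intro conjI allI impI g_prob_eq_f_prob_mult_p_ab[OF bounded l ab] f_prob_eq_sum_a_seq_lambda_pat[OF bounded_removed ab])
      (auto simp: le_Suc_eq numeral_eq_Suc)
qed

end
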